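(* Let $p$ be a prime. (1) The filtration $(F_iA_{(p)*})_{i\in\mathbb Z}$ on $A_{(p)*}$ satisfies conditions (E1* )–(E6* ). (2) $\rho_p(F_iA_{(p)*})=F_i\mathcal A_{p*}$ for all $i\in\mathbb Z$.
   Context: For $p$ odd, $A_{(p)*}=E(x_{i1}\mid i\ge2)\otimes\mathbb F_p[x_{ij}\mid i>j\ge2]$ with $\deg x_{i1}=2p^{i-2}-1$ and $\deg x_{ij}=2p^{j-2}(p^{i-j}-1)$ for $i>j\ge2$; for $p=2$, $A_{(2)*}=\mathbb F_2[x_{ij}\mid i>j\ge1]$ with $\deg x_{ij}=2^{j-1}(2^{i-j}-1)$. It is a commutative graded Hopf algebra with coproduct $\mu^*(x_{ij})=x_{ij}\otimes1+\sum_{k=j+1}^{i-1}x_{ik}\otimes x_{kj}+1\otimes x_{ij}$ and counit $x_{ij}\mapsto0$. For $p$ odd, $F_iA_{(p)*}$ is the span of monomials $x_{k_11}\cdots x_{k_m1}x_{i_1j_1}\cdots x_{i_nj_n}$ with $j_1,\dots,j_n\ge2$ and $m+2\sum_{l=1}^np^{j_l-2}\le i$; for $p=2$, $F_iA_{(2)*}$ is the span of monomials $x_{i_1j_1}\cdots x_{i_nj_n}$ with $\sum_{l=1}^n2^{j_l-1}\le i$ (so $F_iA_{(p)*}=0$ for $i<0$). For a graded Hopf algebra $A_*$ with product $\delta^*$, coproduct $\mu^*$ and increasing filtration $(F_iA_* )$, put $E_i^kA_*=(F_iA_* )_k/(F_{i-1}A_* )_k$ ($k$ the degree) and consider: (E1*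 ) $F_iA_*=0$ for $i<0$; (E2* ) $\bigcup_iF_iA_*=A_*$; (E3* ) $\mu^*(F_iA_* )\subset A_*\otimes F_iA_*$ for all $i$; (E4* ) $\mu^*(F_iA_k)\subset\sum_{j\in\mathbb Z}F_{j+i}A_{k-j}\otimes A_j$ for all $i,k$; (E5* ) $\delta^*(F_jA_*\otimes F_kA_* )\subset F_{j+k}A_*$; (E6* ) $E_{2i+\varepsilon}^kA_*=0$ ($i,k\in\mathbb Z$, $\varepsilon\in\{0,1\}$) whenever $k<2i(p-1)+\varepsilon$ or $2i+\varepsilon+k\not\equiv0,2\pmod{2p}$. $\mathcal A_{p*}$ is the dual Steenrod algebra, $=E(\tau_0,\tau_1,\dots)\otimes\mathbb F_p[\xi_1,\xi_2,\dots]$ for $p$ odd and $\mathbb F_2[\zeta_1,\zeta_2,\dots]$ for $p=2$ (Milnor generators, $\deg\tau_n=2p^n-1$, $\deg\xi_n=2p^n-2$, $\deg\zeta_n=2^n-1$, $\xi_0=\zeta_0=1$). The Hopf algebra map $\rho_p\colon A_{(p)*}\to\mathcal A_{p*}$ is given by $\rho_p(x_{i1})=-\tau_{i-2}$, $\rho_p(x_{ij})=\xi_{i-j}^{p^{j-2}}$ ($j\ge2$) for $p$ odd, and $\rho_2(x_{ij})=\zeta_{i-j}^{2^{j-1}}$. $F_i\mathcal A_{p*}$ is the filtration dual to the excess filtration of the Steenrod algebra; equivalently, $F_i\mathcal A_{p*}$ is spanned by the monomials $\tau_0^{\varepsilon_0}\tau_1^{\varepsilon_1}\cdots\xi_1^{r_1}\xi_2^{r_2}\cdots$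 with $\sum\varepsilon_k+2\sum r_k\le i$ ($p$ odd), resp. $\zeta_1^{r_1}\zeta_2^{r_2}\cdots$ with $\sum r_k\le i$ ($p=2$). *)

theory Defs
  imports Main "HOL-Library.Product_Lexorder" "HOL-Computational_Algebra.Primes"
begin

text \<open>Monomials in variables of type 'v are exponent functions 'v => nat (finitely many
nonzero exponents). An element of the algebra is a coefficient function on monomials
(finitely supported). Variables carry a parity (odd = exterior generator); the basis
monomial m denotes the ordered product of its variables in increasing order of 'v.\<close>

type_synonym ('v, 'k) salg = "('v \<Rightarrow> nat) \<Rightarrow> 'k"

definition supp :: "('m \<Rightarrow> 'k::zero) \<Rightarrow> 'm set" where
  "supp f = {m. f m \<noteq> 0}"

definition vars :: "('v \<Rightarrow> nat) \<Rightarrow> 'v set" where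
  "vars m = {v. m v \<noteq> 0}"

text \<open>Sign (Koszul rule) for multiplying basis monomial a by basis monomial b.\<close>
definition sgn_coeff :: "('v::linorder \<Rightarrow> bool) \<Rightarrow> ('v \<Rightarrow> nat) \<Rightarrow> ('v \<Rightarrow> nat) \<Rightarrow> 'k::comm_ring_1" where
  "sgn_coeff od a b =
     (if (\<exists>v. od v \<and> a v \<noteq> 0 \<and> b v \<noteq> 0) then 0
      else (- 1) ^ card {(u, v). od u \<and> od v \<and> a u \<noteq> 0 \<and> b v \<noteq> 0 \<and> v < u})"

definition smult :: "('v::linorder \<Rightarrow> bool) \<Rightarrow> ('v, 'k::comm_ring_1) salg \<Rightarrow> ('v, 'k) salg \<Rightarrow> ('v, 'k) salg" where
  "smult od f g = (\<lambda>m. \<Sum>(a, b) \<in> {(a, b). a \<in> supp f \<and> b \<in> supp g \<and> (\<lambda>v. a v + b v) = m}.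
                          sgn_coeff od a b * f a * g b)"

definition sone :: "('v, 'k::comm_ring_1) salg" where
  "sone = (\<lambda>m. if m = (\<lambda>_. 0) then 1 else 0)"

definition svar :: "'v \<Rightarrow> ('v, 'k::comm_ring_1) salg" where
  "svar v = (\<lambda>m. if m = (\<lambda>u. if u = v then 1 else 0) then 1 else 0)"

definition spow :: "('v::linorder \<Rightarrow> bool) \<Rightarrow> ('v, 'k::comm_ring_1) salg \<Rightarrow> nat \<Rightarrow> ('v, 'k) salg" where
  "spow od f n = ((smult od f) ^^ n) sone"

text \<open>Algebra homomorphism out of a free graded-commutative algebra, determined by the
images h of the generators: a basis monomial goes to the ordered product of the images.\<close>
definition smono_img :: "('w::linorder \<Rightarrow> bool) \<Rightarrow> ('v::linorder \<Rightarrow> ('w, 'k::comm_ring_1) salg)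
    \<Rightarrow> ('v \<Rightarrow> nat) \<Rightarrow> ('w, 'k) salg" where
  "smono_img od' h m =
     foldr (\<lambda>v acc. smult od' (spow od' (h v) (m v)) acc) (sorted_list_of_set (vars m)) sone"

definition sext :: "('w::linorder \<Rightarrow> bool) \<Rightarrow> ('v::linorder \<Rightarrow> ('w, 'k::comm_ring_1) salg)
    \<Rightarrow> ('v, 'k) salg \<Rightarrow> ('w, 'k) salg" where
  "sext od' h f = (\<lambda>m'. \<Sum>m \<in> supp f. f m * smono_img od' h m m')"

definition valid_mono :: "('v \<Rightarrow> bool) \<Rightarrow> ('v \<Rightarrow> bool) \<Rightarrow> ('v \<Rightarrow> nat) \<Rightarrow> bool" where
  "valid_mono V od m \<longleftrightarrow> finite (vars m) \<and> vars m \<subseteq> {v. V v} \<and> (\<forall>v. od v \<longrightarrow> m v \<le> 1)"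

definition salg_carrier :: "('v \<Rightarrow> bool) \<Rightarrow> ('v \<Rightarrow> bool) \<Rightarrow> ('v, 'k::zero) salg set" where
  "salg_carrier V od = {f. finite (supp f) \<and> (\<forall>m \<in> supp f. valid_mono V od m)}"

definition mono_sum :: "('v \<Rightarrow> int) \<Rightarrow> ('v \<Rightarrow> nat) \<Rightarrow> int" where
  "mono_sum w m = (\<Sum>v \<in> vars m. int (m v) * w v)"

definition homog :: "('v \<Rightarrow> int) \<Rightarrow> int \<Rightarrow> ('v, 'k::zero) salg \<Rightarrow> bool" where
  "homog deg k f \<longleftrightarrow> (\<forall>m \<in> supp f. mono_sum deg m = k)"

text \<open>Generator x_ij is the variable (i,j), with i > j >= 1.  For p odd the x_i1 are exterior.\<close>

type_synonym 'k Aelem = "(nat \<times> nat, 'k) salg"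

definition Avar :: "nat \<times> nat \<Rightarrow> bool" where
  "Avar v \<longleftrightarrow> 1 \<le> snd v \<and> snd v < fst v"

definition Aodd :: "nat \<Rightarrow> nat \<times> nat \<Rightarrow> bool" where
  "Aodd p v \<longleftrightarrow> odd p \<and> snd v = 1"

definition Adeg :: "nat \<Rightarrow> nat \<times> nat \<Rightarrow> int" where
  "Adeg p v = (case v of (i, j) \<Rightarrow>
     if odd p then (if j = 1 then 2 * int p ^ (i - 2) - 1 else 2 * int p ^ (j - 2) * (int p ^ (i - j) - 1))
     else 2 ^ (j - 1) * (2 ^ (i - j) - 1))"

definition Aweight :: "nat \<Rightarrow> nat \<times> nat \<Rightarrow> int" where
  "Aweight p v = (case v of (i, j) \<Rightarrow>
     if odd p then (if j = 1 then 1 else 2 * int p ^ (j - 2)) else 2 ^ (j - 1))"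

definition A_p :: "nat \<Rightarrow> 'k::comm_ring_1 Aelem set" where
  "A_p p = salg_carrier Avar (Aodd p)"

definition Amult :: "nat \<Rightarrow> 'k::comm_ring_1 Aelem \<Rightarrow> 'k Aelem \<Rightarrow> 'k Aelem" where
  "Amult p = smult (Aodd p)"

definition Fil_A :: "nat \<Rightarrow> int \<Rightarrow> 'k::comm_ring_1 Aelem set" where
  "Fil_A p i = {f \<in> A_p p. \<forall>m \<in> supp f. mono_sum (Aweight p) m \<le> i}"

text \<open>A_(p)* (x) A_(p)*: free graded-commutative algebra on two copies of the generators;
(False, v) is v (x) 1 and (True, v) is 1 (x) v (the left factor comes first, giving the
Koszul sign rule for the tensor product of graded-commutative algebras).\<close>

type_synonym 'k TAelem = "(bool \<times> (nat \<times> nat), 'k) salg"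

definition TAodd :: "nat \<Rightarrow> bool \<times> (nat \<times> nat) \<Rightarrow> bool" where
  "TAodd p v = Aodd p (snd v)"

definition tleft :: "(bool \<times> (nat \<times> nat) \<Rightarrow> nat) \<Rightarrow> (nat \<times> nat \<Rightarrow> nat)" where
  "tleft m = (\<lambda>v. m (False, v))"

definition tright :: "(bool \<times> (nat \<times> nat) \<Rightarrow> nat) \<Rightarrow> (nat \<times> nat \<Rightarrow> nat)" where
  "tright m = (\<lambda>v. m (True, v))"

definition TA_p :: "nat \<Rightarrow> 'k::comm_ring_1 TAelem set" where
  "TA_p p = {g. finite (supp g) \<and>
     (\<forall>m \<in> supp g. valid_mono Avar (Aodd p) (tleft m) \<and> valid_mono Avar (Aodd p) (tright m))}"

definition Acoprod_gen :: "nat \<Rightarrow> nat \<times> nat \<Rightarrow> 'k::comm_ring_1 TAelem" where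
  "Acoprod_gen p v = (case v of (i, j) \<Rightarrow>
     (\<lambda>m. svar (False, (i, j)) m
          + (\<Sum>k \<in> {j + 1..<i}. smult (TAodd p) (svar (False, (i, k))) (svar (True, (k, j))) m)
          + svar (True, (i, j)) m))"

definition Acoprod :: "nat \<Rightarrow> 'k::comm_ring_1 Aelem \<Rightarrow> 'k TAelem" where
  "Acoprod p = sext (TAodd p) (Acoprod_gen p)"

definition E1 :: "nat \<Rightarrow> (int \<Rightarrow> 'k::comm_ring_1 Aelem set) \<Rightarrow> bool" where
  "E1 p F \<longleftrightarrow> (\<forall>i < 0. F i = {(\<lambda>_. 0)})"

definition E2 :: "nat \<Rightarrow> (int \<Rightarrow> 'k::comm_ring_1 Aelem set) \<Rightarrow> bool" where
  "E2 p F \<longleftrightarrow> (\<Union>i. F i) = A_p p"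

text \<open>A (x) F_i A = span of the tensor monomials whose right factor has weight <= i.\<close>
definition E3 :: "nat \<Rightarrow> (int \<Rightarrow> 'k::comm_ring_1 Aelem set) \<Rightarrow> bool" where
  "E3 p F \<longleftrightarrow> (\<forall>i. \<forall>f \<in> F i. Acoprod p f \<in> TA_p p \<and>
      (\<forall>m \<in> supp (Acoprod p f). mono_sum (Aweight p) (tright m) \<le> i))"

text \<open>sum_j F_{j+i} A_{k-j} (x) A_j = span of the tensor monomials a (x) b with, for some j,
weight a <= j+i, deg a = k-j, deg b = j.\<close>
definition E4 :: "nat \<Rightarrow> (int \<Rightarrow> 'k::comm_ring_1 Aelem set) \<Rightarrow> bool" where
  "E4 p F \<longleftrightarrow> (\<forall>i k. \<forall>f \<in> F i. homog (Adeg p) k f \<longrightarrow>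
      Acoprod p f \<in> TA_p p \<and>
      (\<forall>m \<in> supp (Acoprod p f). \<exists>j::int.
          mono_sum (Aweight p) (tleft m) \<le> j + i \<and>
          mono_sum (Adeg p) (tleft m) = k - j \<and>
          mono_sum (Adeg p) (tright m) = j))"

definition E5 :: "nat \<Rightarrow> (int \<Rightarrow> 'k::comm_ring_1 Aelem set) \<Rightarrow> bool" where
  "E5 p F \<longleftrightarrow> (\<forall>j k. \<forall>f \<in> F j. \<forall>g \<in> F k. Amult p f g \<in> F (j + k))"

text \<open>E^k_n = (F_n A)_k / (F_{n-1} A)_k vanishes, i.e. (F_n A)_k is contained in F_{n-1} A.\<close>
definition E6 :: "nat \<Rightarrow> (int \<Rightarrow> 'k::comm_ring_1 Aelem set) \<Rightarrow> bool" where
  "E6 p F \<longleftrightarrow> (\<forall>i k::int. \<forall>\<epsilon> \<in> {0, 1::int}.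
      (k < 2 * i * (int p - 1) + \<epsilon> \<or> (2 * i + \<epsilon> + k) mod (2 * int p) \<notin> {0, 2}) \<longrightarrow>
      (\<forall>f \<in> F (2 * i + \<epsilon>). homog (Adeg p) k f \<longrightarrow> f \<in> F (2 * i + \<epsilon> - 1)))"

text \<open>Variables: (True, n) is tau_n (n >= 0, only for p odd); (False, n) is xi_n (p odd)
resp. zeta_n (p = 2), n >= 1.\<close>

type_synonym 'k Selem = "(bool \<times> nat, 'k) salg"

definition Svar :: "nat \<Rightarrow> bool \<times> nat \<Rightarrow> bool" where
  "Svar p v \<longleftrightarrow> (if fst v then odd p else 1 \<le> snd v)"

definition Sodd :: "nat \<Rightarrow> bool \<times> nat \<Rightarrow> bool" where
  "Sodd p v \<longleftrightarrow> fst v \<and> odd p"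

definition Sweight :: "nat \<Rightarrow> bool \<times> nat \<Rightarrow> int" where
  "Sweight p v = (if fst v then 1 else if odd p then 2 else 1)"

definition S_p :: "nat \<Rightarrow> 'k::comm_ring_1 Selem set" where
  "S_p p = salg_carrier (Svar p) (Sodd p)"

text \<open>F_i of the dual Steenrod algebra (dual of the excess filtration).\<close>
definition Fil_S :: "nat \<Rightarrow> int \<Rightarrow> 'k::comm_ring_1 Selem set" where
  "Fil_S p i = {f \<in> S_p p. \<forall>m \<in> supp f. mono_sum (Sweight p) m \<le> i}"

definition rho_gen :: "nat \<Rightarrow> nat \<times> nat \<Rightarrow> 'k::comm_ring_1 Selem" where
  "rho_gen p v = (case v of (i, j) \<Rightarrow>
     if odd p then
       (if j = 1 then (\<lambda>m. - svar (True, i - 2) m)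
        else spow (Sodd p) (svar (False, i - j)) (p ^ (j - 2)))
     else spow (Sodd p) (svar (False, i - j)) (2 ^ (j - 1)))"

definition rho :: "nat \<Rightarrow> 'k::comm_ring_1 Aelem \<Rightarrow> 'k Selem" where
  "rho p = sext (Sodd p) (rho_gen p)"

end

theory Submission
  imports Defs
begin

(* Everything is reduced to statements about single basis monomials.
   - A general support principle for the algebra maps built by sext: if a relation R between
     source and target monomials contains (0,0), is additive (for products with disjoint
     exterior parts) and relates each generator to every monomial in the support of its
     image, then it relates every source monomial to every monomial in the support of its
     image.  Instantiated with the coproduct and with rho_p, this yields (E3* ), (E4* ) and the
     inclusion rho_p(F_i) <= F_i.
   - (E1* ), (E2* ), (E5* ) are immediate, since the weight is additive and non-negative.
   - (E6* ) follows from two numerical facts about a monomial of weight n and degree k: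
     k >= (p-1)(n - n mod 2) + n mod 2 and n + k = 0 or 2 (mod 2p); both are obtained by
     summing elementary estimates for the generators x_ij.
   - rho_p sends each generator to +-1 times a power of a Milnor generator of the same
     weight, so it preserves weights.  Conversely it sends x_i1, x_i2 (p odd), resp. x_i1
     (p = 2), to +-1 times distinct Milnor generators; hence every Milnor monomial is a
     nonzero multiple of the image of a monomial of the same weight (its lift), and over a
     field this gives an explicit preimage in F_i of every element of F_i. *)

definition scaled_mono :: "'m \<Rightarrow> 'k::zero \<Rightarrow> 'm \<Rightarrow> 'k" where
  "scaled_mono a c = (\<lambda>m. if m = a then c else 0)"

definition single_mono :: "'v \<Rightarrow> nat \<Rightarrow> 'v \<Rightarrow> nat" where
  "single_mono v n = (\<lambda>u. if u = v then n else 0)"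

definition odd_disjoint :: "('v \<Rightarrow> bool) \<Rightarrow> ('v \<Rightarrow> nat) \<Rightarrow> ('v \<Rightarrow> nat) \<Rightarrow> bool" where
  "odd_disjoint od a b \<longleftrightarrow> (\<forall>v. od v \<longrightarrow> a v = 0 \<or> b v = 0)"

lemma supp_scaled_mono: "supp (scaled_mono a c) = (if c = 0 then {} else {a})"
  by (auto simp: supp_def scaled_mono_def)

lemma svar_eq: "svar v = scaled_mono (single_mono v 1) 1"
  unfolding svar_def scaled_mono_def single_mono_def by (simp add: One_nat_def)

lemma sone_eq: "sone = scaled_mono (\<lambda>_. 0) 1"
  by (simp add: sone_def scaled_mono_def)

lemma single_mono_0: "single_mono v 0 = (\<lambda>_. 0)"
  by (simp add: single_mono_def fun_eq_iff)

lemma single_mono_add: "(\<lambda>u. single_mono v m u + single_mono v n u) = single_mono v (m + n)"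
  by (simp add: single_mono_def fun_eq_iff)

lemma supp_empty_iff: "supp f = {} \<longleftrightarrow> f = (\<lambda>_. 0)"
  by (auto simp: supp_def)

lemma sgn_coeff_nonzero:
  "sgn_coeff od a b \<noteq> (0::'k::idom) \<longleftrightarrow> odd_disjoint od a b"
  by (auto simp: sgn_coeff_def odd_disjoint_def)

lemma sgn_coeff_one:
  assumes "(\<forall>u. od u \<longrightarrow> a u = 0) \<or> (\<forall>u. od u \<longrightarrow> b u = 0)"
  shows "sgn_coeff od a b = 1"
proof -
  have "{(u, v). od u \<and> od v \<and> a u \<noteq> 0 \<and> b v \<noteq> 0 \<and> v < u} = {}"
    using assms by auto
  moreover have "\<not> (\<exists>v. od v \<and> a v \<noteq> 0 \<and> b v \<noteq> 0)"
    using assms by auto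
  ultimately show ?thesis unfolding sgn_coeff_def by (simp only: if_False card.empty power_0)
qed

lemma supp_smultE:
  fixes f g :: "('v::linorder, 'k::comm_ring_1) salg"
  assumes "m \<in> supp (smult od f g)"
  obtains a b where "a \<in> supp f" "b \<in> supp g" "m = (\<lambda>v. a v + b v)" "odd_disjoint od a b"
proof -
  from assms have "(\<Sum>(a, b) \<in> {(a, b). a \<in> supp f \<and> b \<in> supp g \<and> (\<lambda>v. a v + b v) = m}.
      sgn_coeff od a b * f a * g b) \<noteq> 0"
    by (simp add: supp_def smult_def)
  then obtain ab where ab: "ab \<in> {(a, b). a \<in> supp f \<and> b \<in> supp g \<and> (\<lambda>v. a v + b v) = m}"
      "(\<lambda>(a, b). sgn_coeff od a b * f a * g b) ab \<noteq> 0"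
    by (rule sum.not_neutral_contains_not_neutral)
  obtain a b where "ab = (a, b)" by (cases ab)
  with ab have "a \<in> supp f" "b \<in> supp g" "m = (\<lambda>v. a v + b v)" "sgn_coeff od a b \<noteq> (0::'k)"
    by auto
  moreover from this(4) have "odd_disjoint od a b"
    by (auto simp: sgn_coeff_def odd_disjoint_def split: if_splits)
  ultimately show ?thesis using that by blast
qed

lemma finite_supp_smult:
  assumes "finite (supp f)" "finite (supp g)"
  shows "finite (supp (smult od f g))"
proof -
  have "supp (smult od f g) \<subseteq> (\<lambda>(a, b). (\<lambda>v. a v + b v)) ` (supp f \<times> supp g)"
    by (auto elim!: supp_smultE)
  then show ?thesis using assms finite_subset by blast
qed

lemma smult_scaled_mono:
  "smult od (scaled_mono a c) (scaled_mono b d) = scaled_mono (\<lambda>v. a v + b v) (sgn_coeff od a b * c * d)"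
proof (cases "c = 0 \<or> d = 0")
  case True
  then show ?thesis by (auto simp: smult_def supp_scaled_mono scaled_mono_def fun_eq_iff)
next
  case False
  show ?thesis
  proof
    fix m
    have "{(a', b'). a' \<in> supp (scaled_mono a c) \<and> b' \<in> supp (scaled_mono b d) \<and> (\<lambda>v. a' v + b' v) = m}
        = (if m = (\<lambda>v. a v + b v) then {(a, b)} else {})"
      using False by (auto simp: supp_scaled_mono)
    then show "smult od (scaled_mono a c) (scaled_mono b d) m = scaled_mono (\<lambda>v. a v + b v) (sgn_coeff od a b * c * d) m"
      by (simp add: smult_def scaled_mono_def)
  qed
qed

lemma spow_0: "spow od f 0 = sone"
  by (simp add: spow_def)

lemma spow_Suc: "spow od f (Suc n) = smult od f (spow od f n)"
  by (simp add: spow_def)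

text \<open>Powers of a scaled variable; for an odd variable only the exponents 0 and 1 are
allowed, since its square vanishes.\<close>

lemma spow_scaled_single:
  fixes c :: "'k::comm_ring_1"
  assumes "\<not> od u \<or> n \<le> 1"
  shows "spow od (scaled_mono (single_mono u 1) c) n = scaled_mono (single_mono u n) (c ^ n)"
  using assms
proof (induction n)
  case 0
  then show ?case by (simp add: spow_0 sone_eq single_mono_0)
next
  case (Suc n)
  have "sgn_coeff od (single_mono u 1) (single_mono u n) = (1::'k)"
    by (rule sgn_coeff_one) (use Suc.prems in \<open>auto simp: single_mono_def\<close>)
  with Suc show ?case
    by (simp add: spow_Suc smult_scaled_mono single_mono_add)
qed

lemma finite_supp_spow: "finite (supp f) \<Longrightarrow> finite (supp (spow od f n))"
  by (induction n) (auto simp: spow_0 spow_Suc sone_eq supp_scaled_mono finite_supp_smult)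

lemma finite_supp_smono_img:
  assumes "finite (vars x)" "\<And>v. v \<in> vars x \<Longrightarrow> finite (supp (h v))"
  shows "finite (supp (smono_img od h x))"
proof -
  have "finite (supp (foldr (\<lambda>v acc. smult od (spow od (h v) (x v)) acc) L sone))"
    if "set L \<subseteq> vars x" for L
    using that by (induction L) (auto simp: sone_eq supp_scaled_mono assms(2) finite_supp_smult finite_supp_spow)
  then show ?thesis using assms(1) by (simp add: smono_img_def)
qed

lemma supp_sext: "supp (sext od h f) \<subseteq> (\<Union>x\<in>supp f. supp (smono_img od h x))"
proof
  fix m assume "m \<in> supp (sext od h f)"
  then have "(\<Sum>x \<in> supp f. f x * smono_img od h x m) \<noteq> 0"
    by (simp add: supp_def sext_def)
  then obtain x where "x \<in> supp f" "f x * smono_img od h x m \<noteq> 0"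
    by (rule sum.not_neutral_contains_not_neutral)
  then show "m \<in> (\<Union>x\<in>supp f. supp (smono_img od h x))"
    by (auto simp: supp_def)
qed

section \<open>The support principle for algebra maps\<close>

definition multiplicative_rel ::
    "('w \<Rightarrow> bool) \<Rightarrow> (('v \<Rightarrow> nat) \<Rightarrow> ('w \<Rightarrow> nat) \<Rightarrow> bool) \<Rightarrow> bool" where
  "multiplicative_rel od R \<longleftrightarrow> R (\<lambda>_. 0) (\<lambda>_. 0) \<and>
     (\<forall>x y a b. R x a \<longrightarrow> R y b \<longrightarrow> odd_disjoint od a b \<longrightarrow> R (\<lambda>v. x v + y v) (\<lambda>v. a v + b v))"

lemma multiplicative_relD:
  assumes "multiplicative_rel od R"
  shows "R (\<lambda>_. 0) (\<lambda>_. 0)"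
    and "R x a \<Longrightarrow> R y b \<Longrightarrow> odd_disjoint od a b \<Longrightarrow> R (\<lambda>v. x v + y v) (\<lambda>v. a v + b v)"
  using assms unfolding multiplicative_rel_def by blast+

lemma supp_spow_rel:
  fixes f :: "('w::linorder, 'k::comm_ring_1) salg"
  assumes R: "multiplicative_rel od R"
    and gen: "\<And>a. a \<in> supp f \<Longrightarrow> R (single_mono u 1) a"
  shows "b \<in> supp (spow od f n) \<Longrightarrow> R (single_mono u n) b"
proof (induction n arbitrary: b)
  case 0
  then show ?case
    using multiplicative_relD(1)[OF R] by (simp add: spow_0 sone_eq supp_scaled_mono single_mono_0)
next
  case (Suc n)
  then obtain a c where "a \<in> supp f" "c \<in> supp (spow od f n)" "b = (\<lambda>v. a v + c v)" "odd_disjoint od a c"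
    by (auto simp: spow_Suc elim: supp_smultE)
  with Suc.IH gen multiplicative_relD(2)[OF R] show ?case
    by (metis single_mono_add plus_1_eq_Suc)
qed

lemma supp_smono_img_rel:
  fixes h :: "'v::linorder \<Rightarrow> ('w::linorder, 'k::comm_ring_1) salg"
  assumes R: "multiplicative_rel od R"
    and gen: "\<And>v a. v \<in> vars x \<Longrightarrow> a \<in> supp (h v) \<Longrightarrow> R (single_mono v 1) a"
    and fin: "finite (vars x)"
  shows "b \<in> supp (smono_img od h x) \<Longrightarrow> R x b"
proof -
  let ?restr = "\<lambda>L u. if u \<in> set L then x u else 0"
  have restr_rel: "R (?restr L) b"
    if "b \<in> supp (foldr (\<lambda>v acc. smult od (spow od (h v) (x v)) acc) L sone)"
      and "set L \<subseteq> vars x" "distinct L" for L b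
    using that
  proof (induction L arbitrary: b)
    case Nil
    then show ?case using multiplicative_relD(1)[OF R] by (simp add: sone_eq supp_scaled_mono)
  next
    case (Cons v L)
    then obtain a c where ac: "a \<in> supp (spow od (h v) (x v))"
        "c \<in> supp (foldr (\<lambda>v acc. smult od (spow od (h v) (x v)) acc) L sone)"
        "b = (\<lambda>u. a u + c u)" "odd_disjoint od a c"
      by (auto elim: supp_smultE)
    have "R (single_mono v (x v)) a"
      using supp_spow_rel[OF R, of "h v" v] gen Cons.prems(2) ac(1) by auto
    moreover have "R (?restr L) c" using Cons ac(2) by auto
    moreover have "(\<lambda>u. single_mono v (x v) u + ?restr L u) = ?restr (v # L)"
      using Cons.prems(3) by (auto simp: single_mono_def)
    ultimately show ?case using multiplicative_relD(2)[OF R] ac(3,4) by metis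
  qed
  define L where "L = sorted_list_of_set (vars x)"
  have L: "set L = vars x" "distinct L"
    using fin by (simp_all add: L_def)
  assume "b \<in> supp (smono_img od h x)"
  then have "b \<in> supp (foldr (\<lambda>v acc. smult od (spow od (h v) (x v)) acc) L sone)"
    by (simp add: smono_img_def L_def)
  then have "R (?restr L) b"
    using L by (intro restr_rel) auto
  moreover have "?restr L = x"
    using L by (auto simp: vars_def)
  ultimately show "R x b" by simp
qed

lemma foldr_scaled_vars:
  fixes h :: "'v::linorder \<Rightarrow> ('w::linorder, 'k::field) salg"
  assumes "\<And>v. v \<in> set L \<Longrightarrow> h v = scaled_mono (single_mono (g v) 1) (c v)"
    and "\<And>v. v \<in> set L \<Longrightarrow> c v \<noteq> 0"
    and "inj_on g (set L)"
    and "\<And>v. v \<in> set L \<Longrightarrow> od (g v) \<Longrightarrow> x v \<le> 1"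
    and "distinct L"
  shows "\<exists>c' M. c' \<noteq> 0 \<and> foldr (\<lambda>v acc. smult od (spow od (h v) (x v)) acc) L sone = scaled_mono M c'
     \<and> (\<forall>v\<in>set L. M (g v) = x v) \<and> (\<forall>u. u \<notin> g ` set L \<longrightarrow> M u = 0)"
  using assms
proof (induction L)
  case Nil
  show ?case by (intro exI[of _ "1::'k"] exI[of _ "\<lambda>_. 0"]) (simp add: sone_eq)
next
  case (Cons v L)
  have gv: "g v \<notin> g ` set L"
    using Cons.prems(3,5) by auto
  obtain c' M where cM: "c' \<noteq> 0"
      "foldr (\<lambda>v acc. smult od (spow od (h v) (x v)) acc) L sone = scaled_mono M c'"
      "\<forall>w\<in>set L. M (g w) = x w" "\<forall>u. u \<notin> g ` set L \<longrightarrow> M u = 0"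
    using Cons.IH Cons.prems by (auto simp: inj_on_insert)
  have "\<not> od (g v) \<or> x v \<le> 1"
    using Cons.prems(4) by auto
  then have pow: "spow od (h v) (x v) = scaled_mono (single_mono (g v) (x v)) (c v ^ x v)"
    unfolding Cons.prems(1)[OF list.set_intros(1)] by (rule spow_scaled_single)
  have "odd_disjoint od (single_mono (g v) (x v)) M"
    using cM(4) gv by (auto simp: odd_disjoint_def single_mono_def)
  then have sgn: "sgn_coeff od (single_mono (g v) (x v)) M \<noteq> (0::'k)"
    by (simp add: sgn_coeff_nonzero)
  let ?M = "\<lambda>u. single_mono (g v) (x v) u + M u"
  have "foldr (\<lambda>v acc. smult od (spow od (h v) (x v)) acc) (v # L) sone
      = scaled_mono ?M (sgn_coeff od (single_mono (g v) (x v)) M * c v ^ x v * c')"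
    by (simp add: cM(2) pow smult_scaled_mono)
  moreover have "sgn_coeff od (single_mono (g v) (x v)) M * c v ^ x v * c' \<noteq> 0"
    using sgn cM(1) Cons.prems(2) by simp
  moreover have "\<forall>w\<in>set (v # L). ?M (g w) = x w"
    using cM(3,4) gv Cons.prems(3) by (auto simp: single_mono_def inj_on_def)
  moreover have "\<forall>u. u \<notin> g ` set (v # L) \<longrightarrow> ?M u = 0"
    using cM(4) by (simp add: single_mono_def)
  ultimately show ?case by blast
qed

lemma smono_img_scaled_vars:
  fixes h :: "'v::linorder \<Rightarrow> ('w::linorder, 'k::field) salg"
  assumes fin: "finite (vars x)"
    and img: "\<And>v. v \<in> vars x \<Longrightarrow> h v = scaled_mono (single_mono (g v) 1) (c v)"
    and nonzero: "\<And>v. v \<in> vars x \<Longrightarrow> c v \<noteq> 0"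
    and inj: "inj_on g (vars x)"
    and exterior: "\<And>v. v \<in> vars x \<Longrightarrow> od (g v) \<Longrightarrow> x v \<le> 1"
    and renamed: "\<And>v. v \<in> vars x \<Longrightarrow> s (g v) = x v" "\<And>u. u \<notin> g ` vars x \<Longrightarrow> s u = 0"
  shows "\<exists>c'. c' \<noteq> 0 \<and> smono_img od h x = scaled_mono s c'"
proof -
  have L: "set (sorted_list_of_set (vars x)) = vars x" "distinct (sorted_list_of_set (vars x))"
    using fin by simp_all
  obtain c' M where cM: "c' \<noteq> 0" "smono_img od h x = scaled_mono M c'"
      "\<forall>v\<in>vars x. M (g v) = x v" "\<forall>u. u \<notin> g ` vars x \<longrightarrow> M u = 0"
    using foldr_scaled_vars[where L = "sorted_list_of_set (vars x)" and h = h and g = g and c = c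
        and x = x and od = od] assms L
    unfolding smono_img_def by auto
  have "M = s"
  proof
    fix u
    show "M u = s u"
      by (cases "u \<in> g ` vars x") (use cM(3,4) renamed in auto)
  qed
  then show ?thesis using cM(1,2) by blast
qed

lemma vars_add: "vars (\<lambda>v. a v + b v) = vars a \<union> vars b"
  by (auto simp: vars_def)

lemma vars_single_mono: "vars (single_mono v n) = (if n = 0 then {} else {v})"
  by (auto simp: vars_def single_mono_def)

lemma mono_sum_superset:
  assumes "finite S" "vars m \<subseteq> S"
  shows "mono_sum w m = (\<Sum>v\<in>S. int (m v) * w v)"
  unfolding mono_sum_def
  by (rule sum.mono_neutral_left) (use assms in \<open>auto simp: vars_def\<close>)

lemma mono_sum_add:
  assumes "finite (vars a)" "finite (vars b)"
  shows "mono_sum w (\<lambda>v. a v + b v) = mono_sum w a + mono_sum w b"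
proof -
  let ?S = "vars a \<union> vars b"
  have "mono_sum w (\<lambda>v. a v + b v) = (\<Sum>v\<in>?S. int (a v + b v) * w v)"
    by (rule mono_sum_superset) (use assms in \<open>auto simp: vars_add\<close>)
  also have "\<dots> = (\<Sum>v\<in>?S. int (a v) * w v) + (\<Sum>v\<in>?S. int (b v) * w v)"
    by (simp add: sum.distrib algebra_simps)
  also have "\<dots> = mono_sum w a + mono_sum w b"
    using mono_sum_superset[of ?S a w] mono_sum_superset[of ?S b w] assms by auto
  finally show ?thesis .
qed

lemma mono_sum_zero: "mono_sum w (\<lambda>_. 0) = 0"
  by (simp add: mono_sum_def vars_def)

lemma mono_sum_single: "mono_sum w (single_mono v n) = int n * w v"
  unfolding mono_sum_def vars_single_mono by (simp add: single_mono_def)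

lemma mono_sum_plus: "mono_sum (\<lambda>v. w1 v + w2 v) m = mono_sum w1 m + mono_sum w2 m"
  by (simp add: mono_sum_def sum.distrib algebra_simps)

lemma mono_sum_diff: "mono_sum (\<lambda>v. w1 v - w2 v) m = mono_sum w1 m - mono_sum w2 m"
  by (simp add: mono_sum_def sum_subtractf algebra_simps)

lemma mono_sum_cmult: "mono_sum (\<lambda>v. c * w v) m = c * mono_sum w m"
  by (simp add: mono_sum_def sum_distrib_left algebra_simps)

lemma mono_sum_mono:
  "(\<And>v. v \<in> vars m \<Longrightarrow> w1 v \<le> w2 v) \<Longrightarrow> mono_sum w1 m \<le> mono_sum w2 m"
  unfolding mono_sum_def by (rule sum_mono) (simp add: mult_left_mono)

lemma mono_sum_cong:
  "(\<And>v. v \<in> vars m \<Longrightarrow> w1 v = w2 v) \<Longrightarrow> mono_sum w1 m = mono_sum w2 m"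
  unfolding mono_sum_def by (rule sum.cong) auto

lemma mono_sum_nonneg:
  "(\<And>v. v \<in> vars m \<Longrightarrow> 0 \<le> w v) \<Longrightarrow> 0 \<le> mono_sum w m"
  unfolding mono_sum_def by (rule sum_nonneg) simp

lemma mono_sum_indicator:
  assumes "finite (vars x)"
  shows "mono_sum (\<lambda>v. if v = v0 then 1 else 0) x = int (x v0)"
proof -
  have "mono_sum (\<lambda>v. if v = v0 then 1 else 0) x = (\<Sum>v\<in>vars x. if v = v0 then int (x v) else 0)"
    unfolding mono_sum_def by (rule sum.cong) auto
  also have "\<dots> = int (x v0)"
    using assms by (simp add: vars_def)
  finally show ?thesis .
qed

lemma valid_mono_add:
  assumes "valid_mono V od a" "valid_mono V od b" "odd_disjoint od a b"
  shows "valid_mono V od (\<lambda>v. a v + b v)"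
  using assms unfolding valid_mono_def odd_disjoint_def vars_add
  by (metis add.right_neutral add_0 le_sup_iff finite_Un)

lemma power_diff_split:
  assumes "c \<le> j" "j \<le> i"
  shows "(P::int) ^ (j - c) * P ^ (i - j) = P ^ (i - c)"
proof -
  have "i - c = (j - c) + (i - j)" using assms by simp
  then show ?thesis by (simp add: power_add)
qed

lemma prime_odd_or_two:
  assumes "prime (p::nat)"
  shows "odd p \<or> p = 2"
proof (cases "p = 2")
  case False
  then have "2 < p" using prime_ge_2_nat[OF assms] by simp
  then show ?thesis using prime_odd_nat[OF assms] by simp
qed simp

lemma Avar_cases:
  assumes "Avar v"
  obtains i j where "v = (i, j)" "1 \<le> j" "j < i"
  using assms by (cases v) (auto simp: Avar_def)

lemma Aweight_nonneg: "0 \<le> Aweight p v"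
  by (auto simp: Aweight_def split: prod.splits)

lemma Adeg_nonneg:
  assumes "1 \<le> p" "1 \<le> j" "j < i"
  shows "0 \<le> Adeg p (i, j)"
proof -
  have pow: "1 \<le> int p ^ n" for n
    using assms(1) by simp
  have "0 \<le> 2 * int p ^ (j - 2) * (int p ^ (i - j) - 1)"
    using pow[of "i - j"] assms(1) by (intro mult_nonneg_nonneg) simp_all
  moreover have "(0::int) \<le> 2 ^ (j - 1) * (2 ^ (i - j) - 1)"
    by simp
  moreover have "0 \<le> 2 * int p ^ (i - 2) - 1"
    using pow[of "i - 2"] by linarith
  ultimately show ?thesis unfolding Adeg_def by simp
qed

text \<open>Weight plus degree of x_ij only depends on i: it is 2 p^(i-2).  This is the source of
the congruence in (E6* ).\<close>

lemma Aweight_plus_Adeg: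
  assumes "odd p \<or> p = 2" "1 \<le> j" "j < i"
  shows "Aweight p (i, j) + Adeg p (i, j) = 2 * int p ^ (i - 2)"
  using assms(1)
proof
  assume p: "odd p"
  show ?thesis
  proof (cases "j = 1")
    case False
    then have "int p ^ (j - 2) * int p ^ (i - j) = int p ^ (i - 2)"
      using assms by (intro power_diff_split) auto
    with p False show ?thesis by (simp add: Aweight_def Adeg_def algebra_simps)
  qed (use p in \<open>simp add: Aweight_def Adeg_def\<close>)
next
  assume p: "p = 2"
  have "(2::int) ^ (j - 1) * 2 ^ (i - j) = 2 ^ (i - 1)"
    using assms by (intro power_diff_split) auto
  moreover have "i - 1 = Suc (i - 2)"
    using assms by simp
  then have "(2::int) ^ (i - 1) = 2 * 2 ^ (i - 2)"
    by (simp only: power_Suc)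
  ultimately show ?thesis using p by (simp add: Aweight_def Adeg_def algebra_simps)
qed

text \<open>For p odd the
exterior generators x_i1, i >= 3, have an excess of p over the bound (p-1) weight, while
x_21 falls short of it by p - 2.\<close>

lemma Adeg_lower_bound_odd:
  assumes "odd p" "3 \<le> p" "1 \<le> j" "j < i"
  shows "(int p - 1) * Aweight p (i, j) - (int p - 2) * (if (i, j) = (2, 1) then 1 else 0)
          + int p * (if j = 1 \<and> (i, j) \<noteq> (2, 1) then 1 else 0) \<le> Adeg p (i, j)"
proof (cases "j = 1")
  case True
  show ?thesis
  proof (cases "i = 2")
    case False
    then have "int p ^ 1 \<le> int p ^ (i - 2)"
      using assms True by (intro power_increasing) auto
    then have "int p \<le> int p ^ (i - 2)"
      by (simp only: power_one_right)
    then have "(int p - 1) + int p \<le> 2 * int p ^ (i - 2) - 1"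
      by linarith
    with True False assms show ?thesis by (simp add: Aweight_def Adeg_def)
  qed (use True assms in \<open>simp add: Aweight_def Adeg_def\<close>)
next
  case False
  have "int p ^ 1 \<le> int p ^ (i - j)"
    using assms by (intro power_increasing) auto
  then have "int p - 1 \<le> int p ^ (i - j) - 1"
    by (simp only: power_one_right diff_right_mono)
  then have "2 * int p ^ (j - 2) * (int p - 1) \<le> 2 * int p ^ (j - 2) * (int p ^ (i - j) - 1)"
    by (intro mult_left_mono) auto
  with False assms show ?thesis by (simp add: Aweight_def Adeg_def algebra_simps)
qed

lemma Adeg_lower_bound_even:
  assumes "p = 2" "1 \<le> j" "j < i"
  shows "Aweight p (i, j) \<le> Adeg p (i, j)"
proof -
  have "(2::int) ^ 1 \<le> 2 ^ (i - j)"
    using assms by (intro power_increasing) auto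
  then have "(2::int) ^ (j - 1) * 1 \<le> 2 ^ (j - 1) * (2 ^ (i - j) - 1)"
    by (intro mult_left_mono) auto
  with assms show ?thesis by (simp add: Aweight_def Adeg_def)
qed

lemma Aweight_odd_split:
  assumes "odd p"
  shows "Aweight p v = (if v = (2, 1) then 1 else 0) + (if snd v = 1 \<and> v \<noteq> (2, 1) then 1 else 0)
      + 2 * (if snd v = 1 then 0 else int p ^ (snd v - 2))"
  using assms by (auto simp: Aweight_def split: prod.splits)

lemma coproduct_term_arith:
  assumes "1 \<le> j" "j < k" "k < i" "1 \<le> p"
  shows "Aweight p (k, j) = Aweight p (i, j)"
    and "Aweight p (i, k) \<le> Adeg p (k, j) + Aweight p (i, j)"
    and "Adeg p (i, k) + Adeg p (k, j) = Adeg p (i, j)"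
proof -
  have "Aweight p (k, j) = Aweight p (i, j) \<and> Aweight p (i, k) \<le> Adeg p (k, j) + Aweight p (i, j)
      \<and> Adeg p (i, k) + Adeg p (k, j) = Adeg p (i, j)"
  proof (cases "odd p")
    case True
    have s1: "int p ^ (k - 2) * int p ^ (i - k) = int p ^ (i - 2)"
      using assms by (intro power_diff_split) auto
    show ?thesis
    proof (cases "j = 1")
      case False
      have "int p ^ (j - 2) * int p ^ (k - j) = int p ^ (k - 2)"
        "int p ^ (j - 2) * int p ^ (i - j) = int p ^ (i - 2)"
        using assms False by (intro power_diff_split; simp)+
      with True assms s1 False show ?thesis by (simp add: Aweight_def Adeg_def algebra_simps)
    qed (use True assms s1 in \<open>simp add: Aweight_def Adeg_def algebra_simps\<close>)
  next
    case False
    have "(2::int) ^ (k - 1) * 2 ^ (i - k) = 2 ^ (i - 1)"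
      "(2::int) ^ (j - 1) * 2 ^ (k - j) = 2 ^ (k - 1)"
      "(2::int) ^ (j - 1) * 2 ^ (i - j) = 2 ^ (i - 1)"
      using assms by (intro power_diff_split; simp)+
    with False assms show ?thesis by (simp add: Aweight_def Adeg_def algebra_simps)
  qed
  then show "Aweight p (k, j) = Aweight p (i, j)"
    and "Aweight p (i, k) \<le> Adeg p (k, j) + Aweight p (i, j)"
    and "Adeg p (i, k) + Adeg p (k, j) = Adeg p (i, j)"
    by auto
qed

lemma A_p_iff: "f \<in> A_p p \<longleftrightarrow> finite (supp f) \<and> (\<forall>m\<in>supp f. valid_mono Avar (Aodd p) m)"
  by (simp add: A_p_def salg_carrier_def)

lemma Fil_A_iff:
  "f \<in> Fil_A p i \<longleftrightarrow> finite (supp f) \<and>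
     (\<forall>m\<in>supp f. valid_mono Avar (Aodd p) m \<and> mono_sum (Aweight p) m \<le> i)"
  by (auto simp: Fil_A_def A_p_iff)

lemma mono_sum_Aweight_nonneg: "0 \<le> mono_sum (Aweight p) m"
  by (rule mono_sum_nonneg) (rule Aweight_nonneg)

lemma E1_Fil: "E1 p (Fil_A p :: int \<Rightarrow> 'k::comm_ring_1 Aelem set)"
  unfolding E1_def
proof (intro allI impI)
  fix i :: int assume "i < 0"
  have "supp f = {}" if "f \<in> Fil_A p i" for f :: "'k Aelem"
  proof (rule equals0I)
    fix m assume "m \<in> supp f"
    then have "mono_sum (Aweight p) m \<le> i"
      using that by (simp add: Fil_A_def)
    then show False
      using \<open>i < 0\<close> mono_sum_Aweight_nonneg[of p m] by linarith
  qed
  moreover have "(\<lambda>_. 0) \<in> (Fil_A p i :: 'k Aelem set)"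
    by (simp add: Fil_A_iff supp_def)
  ultimately show "(Fil_A p i :: 'k Aelem set) = {(\<lambda>_. 0)}"
    using supp_empty_iff by blast
qed

lemma E2_Fil: "E2 p (Fil_A p :: int \<Rightarrow> 'k::comm_ring_1 Aelem set)"
  unfolding E2_def
proof
  show "(\<Union>i. Fil_A p i :: 'k Aelem set) \<subseteq> A_p p"
    by (auto simp: Fil_A_def)
  show "A_p p \<subseteq> (\<Union>i. Fil_A p i :: 'k Aelem set)"
  proof
    fix f :: "'k Aelem" assume f: "f \<in> A_p p"
    let ?i = "\<Sum>m\<in>supp f. mono_sum (Aweight p) m"
    have "\<forall>m\<in>supp f. mono_sum (Aweight p) m \<le> ?i"
      using f by (intro ballI member_le_sum) (auto simp: A_p_iff mono_sum_Aweight_nonneg)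
    then have "f \<in> Fil_A p ?i"
      using f by (simp add: Fil_A_def)
    then show "f \<in> (\<Union>i. Fil_A p i)" by blast
  qed
qed

lemma E5_Fil: "E5 p (Fil_A p :: int \<Rightarrow> 'k::comm_ring_1 Aelem set)"
  unfolding E5_def
proof (intro allI ballI)
  fix j k :: int and f g :: "'k Aelem"
  assume f: "f \<in> Fil_A p j" and g: "g \<in> Fil_A p k"
  have "valid_mono Avar (Aodd p) m \<and> mono_sum (Aweight p) m \<le> j + k"
    if "m \<in> supp (Amult p f g)" for m
  proof -
    obtain a b where ab: "a \<in> supp f" "b \<in> supp g" "m = (\<lambda>v. a v + b v)" "odd_disjoint (Aodd p) a b"
      using \<open>m \<in> supp (Amult p f g)\<close> unfolding Amult_def by (rule supp_smultE)
    with f g have "valid_mono Avar (Aodd p) a" "mono_sum (Aweight p) a \<le> j"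
      "valid_mono Avar (Aodd p) b" "mono_sum (Aweight p) b \<le> k"
      by (auto simp: Fil_A_iff)
    moreover from this have "finite (vars a)" "finite (vars b)"
      by (simp_all add: valid_mono_def)
    ultimately show ?thesis
      using ab valid_mono_add[of Avar "Aodd p" a b] mono_sum_add[of a b "Aweight p"] by simp
  qed
  moreover have "finite (supp (Amult p f g))"
    using f g by (simp add: Amult_def Fil_A_iff finite_supp_smult)
  ultimately show "Amult p f g \<in> Fil_A p (j + k)"
    by (simp add: Fil_A_iff)
qed

section \<open>Condition (E6* ): weight and degree of a monomial\<close>

text \<open>Summing the generator identity weight + degree = 2 p^(i-2): for a monomial of weight n
and degree k, n + k is congruent to twice the exponent of x_21 modulo 2p, hence to 0 or 2
(x_21 is exterior for p odd).\<close>

lemma monomial_weight_degree_congruence: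
  assumes p: "prime p" and x: "valid_mono Avar (Aodd p) x"
  shows "(mono_sum (Aweight p) x + mono_sum (Adeg p) x) mod (2 * int p) \<in> {0, 2}"
proof -
  have fin: "finite (vars x)" and gens: "\<And>v. v \<in> vars x \<Longrightarrow> Avar v"
    and exterior: "\<And>v. Aodd p v \<Longrightarrow> x v \<le> 1"
    using x by (auto simp: valid_mono_def)
  have p2: "odd p \<or> p = 2"
    using p by (rule prime_odd_or_two)
  let ?T = "mono_sum (\<lambda>v. if v = (2, 1) then 0 else int p ^ (fst v - 3)) x"
  have "mono_sum (Aweight p) x + mono_sum (Adeg p) x = mono_sum (\<lambda>v. Aweight p v + Adeg p v) x"
    by (simp add: mono_sum_plus)
  also have "\<dots> = mono_sum (\<lambda>v. 2 * (if v = (2, 1) then 1 else 0)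
      + 2 * int p * (if v = (2, 1) then 0 else int p ^ (fst v - 3))) x"
  proof (rule mono_sum_cong)
    fix v assume "v \<in> vars x"
    then obtain i j where v: "v = (i, j)" "1 \<le> j" "j < i"
      using gens by (blast elim: Avar_cases)
    show "Aweight p v + Adeg p v = 2 * (if v = (2, 1) then 1 else 0)
        + 2 * int p * (if v = (2, 1) then 0 else int p ^ (fst v - 3))"
    proof (cases "i = 2")
      case False
      then have "i - 2 = Suc (i - 3)" using v by simp
      then show ?thesis using Aweight_plus_Adeg[OF p2 v(2,3)] v False by simp
    qed (use Aweight_plus_Adeg[OF p2 v(2,3)] v in simp)
  qed
  also have "\<dots> = 2 * int (x (2, 1)) + 2 * int p * ?T"
    by (simp add: mono_sum_plus mono_sum_cmult mono_sum_indicator[OF fin])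
  finally have sum: "mono_sum (Aweight p) x + mono_sum (Adeg p) x = 2 * int (x (2, 1)) + 2 * int p * ?T" .
  from p2 have "(2 * int (x (2, 1))) mod (2 * int p) \<in> {0, 2}"
  proof
    assume "odd p"
    then have "x (2, 1) \<le> 1" "3 \<le> p"
      using exterior[of "(2, 1)"] prime_ge_2_nat[OF p] by (auto simp: Aodd_def elim: oddE)
    then show ?thesis by (cases "x (2, 1)") auto
  next
    assume "p = 2"
    then show ?thesis by (simp; presburger)
  qed
  then show ?thesis unfolding sum by simp
qed

text \<open>The integer arithmetic behind the lower bound for p odd: a is the exponent of x_21,
b the number of the other exterior generators, and the weight n is a + b plus an even
number.\<close>

lemma odd_excess_arith:
  fixes P a b W k n :: int
  assumes "3 \<le> P" "a = 0 \<or> a = 1" "0 \<le> b" "n = a + b + 2 * W"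
    and "(P - 1) * n - (P - 2) * a + P * b \<le> k"
  shows "(P - 1) * (n - n mod 2) + n mod 2 \<le> k"
proof -
  have split: "(P - 1) * (n - n mod 2) + n mod 2 = (P - 1) * n - (P - 2) * (n mod 2)"
    by (simp add: algebra_simps)
  from assms(2) consider "a = 0" | "a = 1" "b = 0" | "a = 1" "1 \<le> b"
    using assms(3) by linarith
  then show ?thesis
  proof cases
    case 1
    have "0 \<le> (P - 2) * (n mod 2)" "0 \<le> P * b"
      using assms(1,3) by simp_all
    moreover have "(P - 1) * n + P * b \<le> k"
      using assms(5) 1 by simp
    ultimately show ?thesis using split by linarith
  next
    case 2
    then have "n mod 2 = 1" using assms(4) by simp
    then show ?thesis using assms(5) 2 split by simp
  next
    case 3
    have "P \<le> P * b" "(P - 2) * (n mod 2) \<le> P - 2" "0 \<le> (P - 2) * (n mod 2)"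
      using assms(1) 3 by (simp_all add: mult_left_le)
    moreover have "(P - 1) * n - (P - 2) + P * b \<le> k"
      using assms(5) 3 by simp
    ultimately show ?thesis using split by linarith
  qed
qed

text \<open>The degree of a monomial of weight n is at least (p-1)(n - n mod 2) + n mod 2, the
minimal degree of an element of excess n in the Steenrod algebra.\<close>

lemma monomial_degree_lower_bound:
  assumes p: "prime p" and x: "valid_mono Avar (Aodd p) x"
  defines "n \<equiv> mono_sum (Aweight p) x"
  shows "(int p - 1) * (n - n mod 2) + n mod 2 \<le> mono_sum (Adeg p) x"
proof -
  have fin: "finite (vars x)" and gens: "\<And>v. v \<in> vars x \<Longrightarrow> Avar v"
    and exterior: "\<And>v. Aodd p v \<Longrightarrow> x v \<le> 1"
    using x by (auto simp: valid_mono_def)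
  consider "p = 2" | "odd p" "3 \<le> p"
    using prime_odd_or_two[OF p] prime_ge_2_nat[OF p] by (auto elim: oddE)
  then show ?thesis
  proof cases
    case 1
    have "n \<le> mono_sum (Adeg p) x"
      unfolding n_def
      by (rule mono_sum_mono) (use gens 1 in \<open>auto elim!: Avar_cases intro: Adeg_lower_bound_even\<close>)
    with 1 show ?thesis by simp
  next
    case 2
    define a where "a = int (x (2, 1))"
    define b where "b = mono_sum (\<lambda>v. if snd v = 1 \<and> v \<noteq> (2, 1) then 1 else 0) x"
    define W where "W = mono_sum (\<lambda>v. if snd v = 1 then 0 else int p ^ (snd v - 2)) x"
    have "a = 0 \<or> a = 1"
      using exterior[of "(2, 1)"] 2 by (auto simp: a_def Aodd_def)
    moreover have "0 \<le> b"
      unfolding b_def by (rule mono_sum_nonneg) simp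
    moreover have "n = a + b + 2 * W"
    proof -
      have "Aweight p = (\<lambda>v. (if v = (2, 1) then 1 else 0) + (if snd v = 1 \<and> v \<noteq> (2, 1) then 1 else 0)
          + 2 * (if snd v = 1 then 0 else int p ^ (snd v - 2)))"
        using Aweight_odd_split[OF 2(1)] by blast
      then show ?thesis
        unfolding n_def a_def b_def W_def by (simp add: mono_sum_plus mono_sum_cmult mono_sum_indicator[OF fin])
    qed
    moreover have "(int p - 1) * n - (int p - 2) * a + int p * b
        = mono_sum (\<lambda>v. (int p - 1) * Aweight p v - (int p - 2) * (if v = (2, 1) then 1 else 0)
            + int p * (if snd v = 1 \<and> v \<noteq> (2, 1) then 1 else 0)) x"
      unfolding n_def a_def b_def
      by (simp add: mono_sum_plus mono_sum_diff mono_sum_cmult mono_sum_indicator[OF fin])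
    moreover have "\<dots> \<le> mono_sum (Adeg p) x"
    proof (rule mono_sum_mono)
      fix v assume "v \<in> vars x"
      then obtain i j where v: "v = (i, j)" "1 \<le> j" "j < i"
        using gens by (blast elim: Avar_cases)
      show "(int p - 1) * Aweight p v - (int p - 2) * (if v = (2, 1) then 1 else 0)
          + int p * (if snd v = 1 \<and> v \<noteq> (2, 1) then 1 else 0) \<le> Adeg p v"
        using Adeg_lower_bound_odd[OF 2 v(2,3)] v(1) by simp
    qed
    moreover have "3 \<le> int p"
      using 2(2) by simp
    ultimately show ?thesis
      by (intro odd_excess_arith[of "int p" a b n W]) auto
  qed
qed

lemma E6_Fil:
  assumes "prime p"
  shows "E6 p (Fil_A p :: int \<Rightarrow> 'k::comm_ring_1 Aelem set)"
  unfolding E6_def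
proof (intro allI ballI impI)
  fix i k e :: int and f :: "'k Aelem"
  assume e: "e \<in> {0, 1}"
    and excluded: "k < 2 * i * (int p - 1) + e \<or> (2 * i + e + k) mod (2 * int p) \<notin> {0, 2}"
    and f: "f \<in> Fil_A p (2 * i + e)" and hom: "homog (Adeg p) k f"
  have "mono_sum (Aweight p) m \<le> 2 * i + e - 1" if m: "m \<in> supp f" for m
  proof (rule ccontr)
    assume "\<not> ?thesis"
    with m f have weight: "mono_sum (Aweight p) m = 2 * i + e" and x: "valid_mono Avar (Aodd p) m"
      by (auto simp: Fil_A_iff)
    have degree: "mono_sum (Adeg p) m = k"
      using hom m by (simp add: homog_def)
    have "(2 * i + e) mod 2 = e" using e by auto
    then have "(int p - 1) * (2 * i) + e \<le> k"
      using monomial_degree_lower_bound[OF assms x] weight degree by simp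
    moreover have "(2 * i + e + k) mod (2 * int p) \<in> {0, 2}"
      using monomial_weight_degree_congruence[OF assms x] weight degree by simp
    ultimately show False
      using excluded by (auto simp: algebra_simps)
  qed
  then show "f \<in> Fil_A p (2 * i + e - 1)"
    using f by (simp add: Fil_A_iff)
qed

section \<open>The coproduct: conditions (E3* ) and (E4* )\<close>

lemma tleft_add: "tleft (\<lambda>u. a u + b u) = (\<lambda>v. tleft a v + tleft b v)"
  by (simp add: tleft_def)

lemma tright_add: "tright (\<lambda>u. a u + b u) = (\<lambda>v. tright a v + tright b v)"
  by (simp add: tright_def)

lemma vars_tleft: "vars (tleft m) \<subseteq> snd ` vars m"
  by (auto simp: vars_def tleft_def image_iff)

lemma vars_tright: "vars (tright m) \<subseteq> snd ` vars m"
  by (auto simp: vars_def tright_def image_iff)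

lemma finite_vars_tleft: "finite (vars m) \<Longrightarrow> finite (vars (tleft m))"
  using vars_tleft finite_subset by blast

lemma finite_vars_tright: "finite (vars m) \<Longrightarrow> finite (vars (tright m))"
  using vars_tright finite_subset by blast

text \<open>These inequalities are exactly what (E3* ) and (E4* ) require.\<close>

definition coprod_rel :: "nat \<Rightarrow> (nat \<times> nat \<Rightarrow> nat) \<Rightarrow> (bool \<times> (nat \<times> nat) \<Rightarrow> nat) \<Rightarrow> bool" where
  "coprod_rel p x m \<longleftrightarrow> finite (vars x) \<and> finite (vars m) \<and> (\<forall>u\<in>vars m. Avar (snd u))
     \<and> (\<forall>u. TAodd p u \<longrightarrow> m u \<le> 1)
     \<and> mono_sum (Aweight p) (tright m) \<le> mono_sum (Aweight p) x
     \<and> mono_sum (Aweight p) (tleft m) \<le> mono_sum (Adeg p) (tright m) + mono_sum (Aweight p) x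
     \<and> mono_sum (Adeg p) (tleft m) + mono_sum (Adeg p) (tright m) = mono_sum (Adeg p) x"

lemma coprod_rel_multiplicative: "multiplicative_rel (TAodd p) (coprod_rel p)"
  unfolding multiplicative_rel_def
proof (intro conjI allI impI)
  show "coprod_rel p (\<lambda>_. 0) (\<lambda>_. 0)"
    by (simp add: coprod_rel_def tleft_def tright_def mono_sum_zero vars_def)
next
  fix x y a b
  assume xa: "coprod_rel p x a" and yb: "coprod_rel p y b" and disj: "odd_disjoint (TAodd p) a b"
  then have fin: "finite (vars x)" "finite (vars y)" "finite (vars a)" "finite (vars b)"
    by (auto simp: coprod_rel_def)
  have add: "mono_sum w (\<lambda>v. x v + y v) = mono_sum w x + mono_sum w y"
    "mono_sum w (tleft (\<lambda>v. a v + b v)) = mono_sum w (tleft a) + mono_sum w (tleft b)"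
    "mono_sum w (tright (\<lambda>v. a v + b v)) = mono_sum w (tright a) + mono_sum w (tright b)" for w
    using fin by (simp_all add: tleft_add tright_add mono_sum_add finite_vars_tleft finite_vars_tright)
  have "\<forall>u. TAodd p u \<longrightarrow> a u \<le> 1" "\<forall>u. TAodd p u \<longrightarrow> b u \<le> 1"
    using xa yb unfolding coprod_rel_def by blast+
  with disj have exterior: "\<forall>u. TAodd p u \<longrightarrow> a u + b u \<le> 1"
    unfolding odd_disjoint_def by fastforce
  have gens: "\<forall>u\<in>vars (\<lambda>v. a v + b v). Avar (snd u)"
    using xa yb unfolding coprod_rel_def vars_add by blast
  show "coprod_rel p (\<lambda>v. x v + y v) (\<lambda>v. a v + b v)"
    using xa yb fin exterior gens unfolding coprod_rel_def add vars_add
    by (elim conjE) (intro conjI, simp_all)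
qed

lemma supp_coprod_gen:
  "supp (Acoprod_gen p (i, j) :: 'k::comm_ring_1 TAelem) \<subseteq> {single_mono (False, (i, j)) 1} \<union>
     {(\<lambda>u. single_mono (False, (i, k)) 1 u + single_mono (True, (k, j)) 1 u) | k. j + 1 \<le> k \<and> k < i}
     \<union> {single_mono (True, (i, j)) 1}"
proof
  fix m assume m: "m \<in> supp (Acoprod_gen p (i, j) :: 'k TAelem)"
  let ?middle = "\<lambda>k. smult (TAodd p) (svar (False, (i, k))) (svar (True, (k, j))) :: 'k TAelem"
  have middle: "?middle k = scaled_mono (\<lambda>u. single_mono (False, (i, k)) 1 u + single_mono (True, (k, j)) 1 u)
      (sgn_coeff (TAodd p) (single_mono (False, (i, k)) 1) (single_mono (True, (k, j)) 1) * 1 * 1)" for k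
    unfolding svar_eq by (rule smult_scaled_mono)
  from m have "svar (False, (i, j)) m + (\<Sum>k \<in> {j + 1..<i}. ?middle k m) + svar (True, (i, j)) m \<noteq> (0::'k)"
    by (simp add: supp_def Acoprod_gen_def)
  then consider "svar (False, (i, j)) m \<noteq> (0::'k)" | "(\<Sum>k \<in> {j + 1..<i}. ?middle k m) \<noteq> 0"
    | "svar (True, (i, j)) m \<noteq> (0::'k)"
    by fastforce
  then show "m \<in> {single_mono (False, (i, j)) 1} \<union>
     {(\<lambda>u. single_mono (False, (i, k)) 1 u + single_mono (True, (k, j)) 1 u) | k. j + 1 \<le> k \<and> k < i}
     \<union> {single_mono (True, (i, j)) 1}"
  proof cases
    case 2
    then obtain k where "k \<in> {j + 1..<i}" "?middle k m \<noteq> 0"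
      by (rule sum.not_neutral_contains_not_neutral)
    then show ?thesis
      unfolding middle by (auto simp: scaled_mono_def split: if_splits)
  qed (auto simp: svar_eq scaled_mono_def split: if_splits)
qed

lemma finite_supp_coprod_gen: "finite (supp (Acoprod_gen p v :: 'k::comm_ring_1 TAelem))"
proof (cases v)
  case (Pair i j)
  have "finite {k::nat. j + 1 \<le> k \<and> k < i}"
    by (rule finite_subset[of _ "{..<i}"]) auto
  then have "finite {(\<lambda>u. single_mono (False, (i, k)) 1 u + single_mono (True, (k, j)) 1 u) | k. j + 1 \<le> k \<and> k < i}"
    by (rule finite_image_set)
  then have "finite ({single_mono (False, (i, j)) 1} \<union>
     {(\<lambda>u. single_mono (False, (i, k)) 1 u + single_mono (True, (k, j)) 1 u) | k. j + 1 \<le> k \<and> k < i}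
     \<union> {single_mono (True, (i, j)) 1})"
    by (simp only: finite_Un finite_insert finite.emptyI simp_thms)
  then show ?thesis
    unfolding Pair by (rule finite_subset[OF supp_coprod_gen])
qed

lemma coprod_rel_gen:
  assumes "Avar v" "a \<in> supp (Acoprod_gen p v :: 'k::comm_ring_1 TAelem)" "1 \<le> p"
  shows "coprod_rel p (single_mono v 1) a"
proof -
  obtain i j where v: "v = (i, j)" "1 \<le> j" "j < i"
    using assms(1) by (rule Avar_cases)
  have w: "0 \<le> Aweight p (i, j)" and d: "0 \<le> Adeg p (i, j)"
    using Aweight_nonneg Adeg_nonneg v assms(3) by auto
  have "a \<in> supp (Acoprod_gen p (i, j) :: 'k TAelem)"
    using assms(2) v(1) by simp
  then have "a \<in> {single_mono (False, (i, j)) 1} \<union>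
     {(\<lambda>u. single_mono (False, (i, k)) 1 u + single_mono (True, (k, j)) 1 u) | k. j + 1 \<le> k \<and> k < i}
     \<union> {single_mono (True, (i, j)) 1}"
    by (rule subsetD[OF supp_coprod_gen])
  then consider "a = single_mono (False, (i, j)) 1"
    | k where "j < k" "k < i" "a = (\<lambda>u. single_mono (False, (i, k)) 1 u + single_mono (True, (k, j)) 1 u)"
    | "a = single_mono (True, (i, j)) 1"
    unfolding Un_iff singleton_iff mem_Collect_eq by (metis Suc_eq_plus1 Suc_le_eq)
  then show ?thesis
  proof cases
    case 1
    then have parts: "tleft a = single_mono (i, j) 1" "tright a = (\<lambda>_. 0)"
      by (auto simp: tleft_def tright_def single_mono_def)
    show ?thesis
      unfolding coprod_rel_def parts mono_sum_single mono_sum_zero unfolding 1 v(1) vars_single_mono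
      using v w by (simp add: Avar_def single_mono_def)
  next
    case (2 k)
    then have parts: "tleft a = single_mono (i, k) 1" "tright a = single_mono (k, j) 1"
      and "vars a = {(False, (i, k)), (True, (k, j))}" "\<forall>u. TAodd p u \<longrightarrow> a u \<le> 1"
      by (auto simp: tleft_def tright_def vars_def single_mono_def)
    then show ?thesis
      unfolding coprod_rel_def parts mono_sum_single unfolding v(1) vars_single_mono
      using 2 v coproduct_term_arith[of j k i p] assms(3) by (simp add: Avar_def)
  next
    case 3
    then have parts: "tleft a = (\<lambda>_. 0)" "tright a = single_mono (i, j) 1"
      by (auto simp: tleft_def tright_def single_mono_def)
    show ?thesis
      unfolding coprod_rel_def parts mono_sum_single mono_sum_zero unfolding 3 v(1) vars_single_mono
      using v w d by (simp add: Avar_def single_mono_def)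
  qed
qed

lemma Acoprod_support:
  fixes f :: "'k::comm_ring_1 Aelem"
  assumes p: "1 \<le> p" and f: "f \<in> A_p p"
  shows "Acoprod p f \<in> TA_p p" and "\<And>m. m \<in> supp (Acoprod p f) \<Longrightarrow> \<exists>x\<in>supp f. coprod_rel p x m"
proof -
  have fin_f: "finite (supp f)" and valid: "\<And>x. x \<in> supp f \<Longrightarrow> valid_mono Avar (Aodd p) x"
    using f by (auto simp: A_p_iff)
  have sub: "supp (Acoprod p f) \<subseteq> (\<Union>x\<in>supp f. supp (smono_img (TAodd p) (Acoprod_gen p :: _ \<Rightarrow> 'k TAelem) x))"
    unfolding Acoprod_def by (rule supp_sext)
  have rel: "coprod_rel p x m" if "x \<in> supp f" "m \<in> supp (smono_img (TAodd p) (Acoprod_gen p :: _ \<Rightarrow> 'k TAelem) x)" for x m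
    using valid[OF that(1)] p
    by (intro supp_smono_img_rel[OF coprod_rel_multiplicative _ _ that(2)] coprod_rel_gen)
      (auto simp: valid_mono_def)
  with sub show related: "\<And>m. m \<in> supp (Acoprod p f) \<Longrightarrow> \<exists>x\<in>supp f. coprod_rel p x m"
    by blast
  have "finite (supp (Acoprod p f))"
    using fin_f valid
    by (intro finite_subset[OF sub] finite_UN_I finite_supp_smono_img finite_supp_coprod_gen)
      (auto simp: valid_mono_def)
  moreover have "valid_mono Avar (Aodd p) (tleft m) \<and> valid_mono Avar (Aodd p) (tright m)"
    if m: "m \<in> supp (Acoprod p f)" for m
  proof -
    obtain x where "coprod_rel p x m"
      using related[OF m] by blast
    then have m: "finite (vars m)" "\<forall>u\<in>vars m. Avar (snd u)" "\<forall>u. TAodd p u \<longrightarrow> m u \<le> 1"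
      by (auto simp: coprod_rel_def)
    then have "vars (tleft m) \<subseteq> {v. Avar v}" "vars (tright m) \<subseteq> {v. Avar v}"
      using vars_tleft[of m] vars_tright[of m] by blast+
    moreover have "finite (vars (tleft m))" "finite (vars (tright m))"
      using m(1) by (simp_all add: finite_vars_tleft finite_vars_tright)
    ultimately show ?thesis
      using m(3) by (auto simp: valid_mono_def tleft_def tright_def TAodd_def)
  qed
  ultimately show "Acoprod p f \<in> TA_p p"
    by (simp add: TA_p_def)
qed

lemma E3_Fil:
  assumes "1 \<le> p"
  shows "E3 p (Fil_A p :: int \<Rightarrow> 'k::comm_ring_1 Aelem set)"
  unfolding E3_def
proof (intro allI ballI conjI)
  fix i and f :: "'k Aelem" assume f: "f \<in> Fil_A p i"
  then have fA: "f \<in> A_p p" by (simp add: Fil_A_def)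
  show "Acoprod p f \<in> TA_p p"
    using Acoprod_support(1)[OF assms fA] .
  fix m assume "m \<in> supp (Acoprod p f)"
  then obtain x where "x \<in> supp f" "coprod_rel p x m"
    using Acoprod_support(2)[OF assms fA] by blast
  with f show "mono_sum (Aweight p) (tright m) \<le> i"
    by (auto simp: coprod_rel_def Fil_A_def)
qed

lemma E4_Fil:
  assumes "1 \<le> p"
  shows "E4 p (Fil_A p :: int \<Rightarrow> 'k::comm_ring_1 Aelem set)"
  unfolding E4_def
proof (intro allI ballI impI conjI)
  fix i k and f :: "'k Aelem" assume f: "f \<in> Fil_A p i" and hom: "homog (Adeg p) k f"
  then have fA: "f \<in> A_p p" by (simp add: Fil_A_def)
  show "Acoprod p f \<in> TA_p p"
    using Acoprod_support(1)[OF assms fA] .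
  fix m assume "m \<in> supp (Acoprod p f)"
  then obtain x where x: "x \<in> supp f" "coprod_rel p x m"
    using Acoprod_support(2)[OF assms fA] by blast
  with f hom have "mono_sum (Aweight p) x \<le> i" "mono_sum (Adeg p) x = k"
    by (auto simp: Fil_A_def homog_def)
  with x(2) show "\<exists>j::int. mono_sum (Aweight p) (tleft m) \<le> j + i \<and>
      mono_sum (Adeg p) (tleft m) = k - j \<and> mono_sum (Adeg p) (tright m) = j"
    by (intro exI[of _ "mono_sum (Adeg p) (tright m)"]) (auto simp: coprod_rel_def)
qed

section \<open>The map rho_p: rho_p(F_i A_(p)* ) = F_i of the dual Steenrod algebra\<close>

definition rho_var :: "nat \<Rightarrow> nat \<times> nat \<Rightarrow> bool \<times> nat" where
  "rho_var p v = (case v of (i, j) \<Rightarrow> if odd p \<and> j = 1 then (True, i - 2) else (False, i - j))"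

definition rho_exp :: "nat \<Rightarrow> nat \<times> nat \<Rightarrow> nat" where
  "rho_exp p v = (case v of (i, j) \<Rightarrow> if odd p then (if j = 1 then 1 else p ^ (j - 2)) else 2 ^ (j - 1))"

definition rho_sign :: "nat \<Rightarrow> nat \<times> nat \<Rightarrow> 'k::comm_ring_1" where
  "rho_sign p v = (if odd p \<and> snd v = 1 then - 1 else 1)"

lemma rho_gen_eq:
  assumes "Avar v"
  shows "rho_gen p v = scaled_mono (single_mono (rho_var p v) (rho_exp p v)) (rho_sign p v :: 'k::comm_ring_1)"
proof -
  obtain i j where v: "v = (i, j)" "1 \<le> j" "j < i"
    using assms by (rule Avar_cases)
  have "spow (Sodd p) (svar (False, n)) e = scaled_mono (single_mono (False, n) e) (1::'k)" for n e
    unfolding svar_eq using spow_scaled_single[of "Sodd p" "(False, n)" e "1::'k"] by (simp add: Sodd_def)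
  moreover have "(\<lambda>m. - svar u m) = scaled_mono (single_mono u 1) (- 1::'k)" for u
    by (auto simp: svar_eq scaled_mono_def)
  ultimately show ?thesis
    using v by (auto simp: rho_gen_def rho_var_def rho_exp_def rho_sign_def)
qed

lemma finite_supp_rho_gen: "Avar v \<Longrightarrow> finite (supp (rho_gen p v :: 'k::comm_ring_1 Selem))"
  by (simp add: rho_gen_eq supp_scaled_mono)

lemma rho_gen_weight:
  assumes "Avar v"
  shows "int (rho_exp p v) * Sweight p (rho_var p v) = Aweight p v"
  using assms by (auto simp: rho_exp_def rho_var_def Sweight_def Aweight_def Avar_def split: prod.splits)

lemma rho_var_Svar: "Avar v \<Longrightarrow> Svar p (rho_var p v)"
  by (auto simp: rho_var_def Svar_def Avar_def split: prod.splits)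

lemma rho_exp_exterior: "Sodd p (rho_var p v) \<Longrightarrow> rho_exp p v = 1"
  by (auto simp: rho_var_def rho_exp_def Sodd_def split: prod.splits if_splits)

lemma rho_gen_valid:
  assumes "Avar v"
  shows "valid_mono (Svar p) (Sodd p) (single_mono (rho_var p v) (rho_exp p v))"
  using rho_var_Svar[OF assms, of p] rho_exp_exterior[of p v]
  unfolding valid_mono_def vars_single_mono by (auto simp: single_mono_def)

definition rho_rel :: "nat \<Rightarrow> (nat \<times> nat \<Rightarrow> nat) \<Rightarrow> (bool \<times> nat \<Rightarrow> nat) \<Rightarrow> bool" where
  "rho_rel p x s \<longleftrightarrow> finite (vars x) \<and> valid_mono (Svar p) (Sodd p) s
     \<and> mono_sum (Sweight p) s = mono_sum (Aweight p) x"

lemma rho_rel_multiplicative: "multiplicative_rel (Sodd p) (rho_rel p)"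
  unfolding multiplicative_rel_def
proof (intro conjI allI impI)
  show "rho_rel p (\<lambda>_. 0) (\<lambda>_. 0)"
    by (simp add: rho_rel_def mono_sum_zero valid_mono_def vars_def)
next
  fix x y a b
  assume xa: "rho_rel p x a" and yb: "rho_rel p y b" and disj: "odd_disjoint (Sodd p) a b"
  then have "finite (vars a)" "finite (vars b)"
    by (auto simp: rho_rel_def valid_mono_def)
  with xa yb disj show "rho_rel p (\<lambda>v. x v + y v) (\<lambda>v. a v + b v)"
    unfolding rho_rel_def by (simp add: valid_mono_add mono_sum_add vars_add)
qed

lemma rho_rel_gen:
  assumes "Avar v" "a \<in> supp (rho_gen p v :: 'k::comm_ring_1 Selem)" "1 \<le> p"
  shows "rho_rel p (single_mono v 1) a"
proof -
  have "a \<in> supp (scaled_mono (single_mono (rho_var p v) (rho_exp p v)) (rho_sign p v :: 'k))"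
    using assms(2) rho_gen_eq[OF assms(1)] by metis
  then have "a = single_mono (rho_var p v) (rho_exp p v)"
    by (simp add: supp_scaled_mono split: if_splits)
  then show ?thesis
    using rho_gen_valid[OF assms(1)] rho_gen_weight[OF assms(1)]
    by (simp add: rho_rel_def vars_single_mono mono_sum_single mult.commute)
qed

lemma S_p_iff: "f \<in> S_p p \<longleftrightarrow> finite (supp f) \<and> (\<forall>m\<in>supp f. valid_mono (Svar p) (Sodd p) m)"
  by (simp add: S_p_def salg_carrier_def)

lemma rho_mono_support:
  assumes "1 \<le> p" "valid_mono Avar (Aodd p) x"
    and "s \<in> supp (smono_img (Sodd p) (rho_gen p :: _ \<Rightarrow> 'k::comm_ring_1 Selem) x)"
  shows "rho_rel p x s"
  using assms
  by (intro supp_smono_img_rel[OF rho_rel_multiplicative _ _ assms(3)] rho_rel_gen)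
    (auto simp: valid_mono_def)

lemma rho_Fil_subset:
  fixes f :: "'k::comm_ring_1 Aelem"
  assumes p: "1 \<le> p" and f: "f \<in> Fil_A p i"
  shows "rho p f \<in> Fil_S p i"
proof -
  have fin_f: "finite (supp f)"
    and valid: "\<And>x. x \<in> supp f \<Longrightarrow> valid_mono Avar (Aodd p) x \<and> mono_sum (Aweight p) x \<le> i"
    using f by (auto simp: Fil_A_iff)
  have sub: "supp (rho p f) \<subseteq> (\<Union>x\<in>supp f. supp (smono_img (Sodd p) (rho_gen p :: _ \<Rightarrow> 'k Selem) x))"
    unfolding rho_def by (rule supp_sext)
  have "finite (supp (rho p f))"
    using fin_f valid
    by (intro finite_subset[OF sub] finite_UN_I finite_supp_smono_img finite_supp_rho_gen)
      (auto simp: valid_mono_def)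
  moreover have "valid_mono (Svar p) (Sodd p) s \<and> mono_sum (Sweight p) s \<le> i"
    if "s \<in> supp (rho p f)" for s
  proof -
    obtain x where "x \<in> supp f" "s \<in> supp (smono_img (Sodd p) (rho_gen p :: _ \<Rightarrow> 'k Selem) x)"
      using sub \<open>s \<in> supp (rho p f)\<close> by blast
    with valid p show ?thesis
      using rho_mono_support[of p x s] by (force simp: rho_rel_def)
  qed
  ultimately show ?thesis
    by (simp add: Fil_S_def S_p_iff)
qed

text \<open>A section of rho_p on monomials.  The Milnor generator u is lifted to the generator
lift_var p u of A_(p)* that rho_p sends to +-u: tau_n to x_(n+2)1 and xi_n to x_(n+2)2 for
p odd, zeta_n to x_(n+1)1 for p = 2.\<close>

definition lift_var :: "nat \<Rightarrow> bool \<times> nat \<Rightarrow> nat \<times> nat" where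
  "lift_var p u = (case u of (b, n) \<Rightarrow>
     if odd p then (if b then (n + 2, 1) else (n + 2, 2)) else (n + 1, 1))"

lemma lift_var_props:
  assumes "Svar p u"
  shows "Avar (lift_var p u)" "rho_var p (lift_var p u) = u" "rho_exp p (lift_var p u) = 1"
  using assms by (auto simp: lift_var_def Avar_def rho_var_def rho_exp_def Svar_def split: prod.splits)

lemma lift_var_exterior: "Aodd p (lift_var p u) \<Longrightarrow> Sodd p u"
  by (auto simp: lift_var_def Aodd_def Sodd_def split: prod.splits if_splits)

definition lift_mono :: "nat \<Rightarrow> (bool \<times> nat \<Rightarrow> nat) \<Rightarrow> nat \<times> nat \<Rightarrow> nat" where
  "lift_mono p s = (\<lambda>v. if v \<in> lift_var p ` {u. Svar p u} then s (rho_var p v) else 0)"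

lemma lift_mono_lift_var: "Svar p u \<Longrightarrow> lift_mono p s (lift_var p u) = s u"
  by (simp add: lift_mono_def lift_var_props)

lemma valid_mono_vars: "valid_mono V od s \<Longrightarrow> u \<in> vars s \<Longrightarrow> V u"
  by (auto simp: valid_mono_def)

lemma vars_lift_mono:
  assumes "valid_mono (Svar p) (Sodd p) s"
  shows "vars (lift_mono p s) = lift_var p ` vars s"
proof
  show "vars (lift_mono p s) \<subseteq> lift_var p ` vars s"
    by (auto simp: vars_def lift_mono_def lift_var_props split: if_splits)
  show "lift_var p ` vars s \<subseteq> vars (lift_mono p s)"
    using valid_mono_vars[OF assms] by (auto simp: vars_def lift_mono_lift_var)
qed

lemma lift_mono_inj:
  assumes "valid_mono (Svar p) (Sodd p) s" "valid_mono (Svar p) (Sodd p) t"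
    and "lift_mono p s = lift_mono p t"
  shows "s = t"
proof
  fix u
  show "s u = t u"
  proof (cases "Svar p u")
    case True
    have "lift_mono p s (lift_var p u) = lift_mono p t (lift_var p u)"
      using assms(3) by simp
    with True show ?thesis by (simp add: lift_mono_lift_var)
  next
    case False
    then have "u \<notin> vars s" "u \<notin> vars t"
      using valid_mono_vars[OF assms(1), of u] valid_mono_vars[OF assms(2), of u] by blast+
    then show ?thesis by (simp add: vars_def)
  qed
qed

lemma lift_mono_valid:
  assumes s: "valid_mono (Svar p) (Sodd p) s"
  shows "valid_mono Avar (Aodd p) (lift_mono p s)"
  unfolding valid_mono_def
proof (intro conjI allI impI)
  show "finite (vars (lift_mono p s))"
    using s by (simp add: vars_lift_mono valid_mono_def)
  show "vars (lift_mono p s) \<subseteq> {v. Avar v}"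
    using valid_mono_vars[OF s] lift_var_props(1) unfolding vars_lift_mono[OF s] by blast
  fix v assume "Aodd p v"
  then show "lift_mono p s v \<le> 1"
    using s lift_var_exterior[of p] by (auto simp: lift_mono_def lift_var_props valid_mono_def)
qed

lemma rho_lift_mono:
  assumes s: "valid_mono (Svar p) (Sodd p) s"
  shows "\<exists>c. c \<noteq> 0 \<and> smono_img (Sodd p) (rho_gen p :: _ \<Rightarrow> 'k::field Selem) (lift_mono p s) = scaled_mono s c"
proof (rule smono_img_scaled_vars)
  let ?x = "lift_mono p s"
  have lifted: "\<exists>u. Svar p u \<and> v = lift_var p u \<and> ?x v = s u" if v: "v \<in> vars ?x" for v
  proof -
    obtain u where "u \<in> vars s" "v = lift_var p u"
      using v unfolding vars_lift_mono[OF s] by blast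
    moreover from this have "Svar p u"
      using valid_mono_vars[OF s] by blast
    ultimately show ?thesis
      using lift_mono_lift_var by blast
  qed
  show "finite (vars ?x)"
    using lift_mono_valid[OF s] by (simp add: valid_mono_def)
  show "rho_gen p v = scaled_mono (single_mono (rho_var p v) 1) (rho_sign p v :: 'k)" if "v \<in> vars ?x" for v
    using lifted[OF that] rho_gen_eq[of v p] by (auto simp: lift_var_props)
  show "rho_sign p v \<noteq> (0::'k)" for v
    by (simp add: rho_sign_def)
  show "inj_on (rho_var p) (vars ?x)"
    by (rule inj_onI) (metis lifted lift_var_props(2))
  show "?x v \<le> 1" if "v \<in> vars ?x" "Sodd p (rho_var p v)" for v
    using lifted[OF that(1)] that(2) s by (auto simp: lift_var_props valid_mono_def)
  show "s (rho_var p v) = ?x v" if "v \<in> vars ?x" for v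
    using lifted[OF that] by (auto simp: lift_var_props)
  show "s u = 0" if "u \<notin> rho_var p ` vars ?x" for u
  proof (rule ccontr)
    assume "s u \<noteq> 0"
    then have "u \<in> vars s" by (simp add: vars_def)
    then have "lift_var p u \<in> vars ?x" "u = rho_var p (lift_var p u)"
      using valid_mono_vars[OF s] lift_var_props(2) unfolding vars_lift_mono[OF s] by auto
    then have "u \<in> rho_var p ` vars ?x"
      by (rule image_eqI[rotated])
    with that show False ..
  qed
qed

text \<open>The lift of s has the weight of s: rho_p preserves weights, and s occurs in the image
of its lift.\<close>

lemma lift_mono_weight:
  fixes c :: "'k::comm_ring_1"
  assumes "1 \<le> p" and s: "valid_mono (Svar p) (Sodd p) s"
    and image: "smono_img (Sodd p) (rho_gen p :: _ \<Rightarrow> 'k Selem) (lift_mono p s) = scaled_mono s c"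
    and "c \<noteq> 0"
  shows "mono_sum (Aweight p) (lift_mono p s) = mono_sum (Sweight p) s"
proof -
  have "s \<in> supp (smono_img (Sodd p) (rho_gen p :: _ \<Rightarrow> 'k Selem) (lift_mono p s))"
    using image \<open>c \<noteq> 0\<close> by (simp add: supp_scaled_mono)
  then have "rho_rel p (lift_mono p s) s"
    using rho_mono_support[OF assms(1) lift_mono_valid[OF s]] by blast
  then show ?thesis by (simp add: rho_rel_def)
qed

text \<open>Surjectivity onto F_i: over a field, f = sum_s f_s s is the image of
sum_s (f_s / c_s) lift(s), where rho_p(lift(s)) = c_s s.\<close>

lemma rho_Fil_surj:
  fixes f :: "'k::field Selem"
  assumes p: "1 \<le> p" and f: "f \<in> Fil_S p i"
  shows "f \<in> rho p ` Fil_A p i"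
proof -
  have fin_f: "finite (supp f)" and valid: "\<And>s. s \<in> supp f \<Longrightarrow> valid_mono (Svar p) (Sodd p) s"
    and weight: "\<And>s. s \<in> supp f \<Longrightarrow> mono_sum (Sweight p) s \<le> i"
    using f by (auto simp: Fil_S_def S_p_iff)
  obtain C where C: "\<And>s. s \<in> supp f \<Longrightarrow> C s \<noteq> 0 \<and>
      smono_img (Sodd p) (rho_gen p :: _ \<Rightarrow> 'k Selem) (lift_mono p s) = scaled_mono s (C s)"
    using rho_lift_mono[OF valid] by metis
  have inj: "inj_on (lift_mono p) (supp f)"
    using lift_mono_inj valid by (blast intro: inj_onI)
  define G :: "'k Aelem" where
    "G = (\<lambda>x. if x \<in> lift_mono p ` supp f
            then f (the_inv_into (supp f) (lift_mono p) x) / C (the_inv_into (supp f) (lift_mono p) x)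
            else 0)"
  have G_lift: "G (lift_mono p s) = f s / C s" if "s \<in> supp f" for s
    using that by (simp add: G_def the_inv_into_f_f[OF inj])
  have supp_G: "supp G = lift_mono p ` supp f"
  proof
    show "supp G \<subseteq> lift_mono p ` supp f"
      by (auto simp: supp_def G_def split: if_splits)
    show "lift_mono p ` supp f \<subseteq> supp G"
      using G_lift C by (auto simp: supp_def)
  qed
  have lift_weight: "mono_sum (Aweight p) (lift_mono p s) = mono_sum (Sweight p) s" if "s \<in> supp f" for s
    using lift_mono_weight[OF p valid[OF that]] C[OF that] by blast
  have "rho p G = f"
  proof
    fix m
    have "rho p G m = (\<Sum>x\<in>supp G. G x * smono_img (Sodd p) (rho_gen p) x m)"
      by (simp add: rho_def sext_def)
    also have "\<dots> = (\<Sum>s\<in>supp f. G (lift_mono p s) * smono_img (Sodd p) (rho_gen p) (lift_mono p s) m)"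
      unfolding supp_G by (rule sum.reindex[OF inj, unfolded comp_def])
    also have "\<dots> = (\<Sum>s\<in>supp f. if m = s then f s else 0)"
      by (rule sum.cong) (use G_lift C in \<open>auto simp: scaled_mono_def\<close>)
    also have "\<dots> = f m"
      using fin_f by (simp add: supp_def)
    finally show "rho p G m = f m" .
  qed
  moreover have "G \<in> Fil_A p i"
    using supp_G fin_f valid weight lift_mono_valid lift_weight by (auto simp: Fil_A_iff)
  ultimately show ?thesis by blast
qed

theorem proposition4p5:
  fixes p :: nat
  assumes "prime p"
    and "CHAR('k::field) = p"
    and "card (UNIV :: 'k set) = p"
  shows "(E1 p (Fil_A p :: int \<Rightarrow> 'k Aelem set) \<and> E2 p (Fil_A p :: int \<Rightarrow> 'k Aelem set) \<and>
          E3 p (Fil_A p :: int \<Rightarrow> 'k Aelem set) \<and> E4 p (Fil_A p :: int \<Rightarrow> 'k Aelem set) \<and>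
          E5 p (Fil_A p :: int \<Rightarrow> 'k Aelem set) \<and> E6 p (Fil_A p :: int \<Rightarrow> 'k Aelem set))
         \<and> (\<forall>i::int. rho p ` (Fil_A p i :: 'k Aelem set) = Fil_S p i)"
proof -
  have p: "1 \<le> p"
    using prime_gt_0_nat[OF assms(1)] by simp
  have "rho p ` (Fil_A p i :: 'k Aelem set) = Fil_S p i" for i
    using rho_Fil_subset[OF p] rho_Fil_surj[OF p] by blast
  then show ?thesis
    using E1_Fil E2_Fil E3_Fil[OF p] E4_Fil[OF p] E5_Fil E6_Fil[OF assms(1)] by blast
qed

end
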